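(* Let $\alpha\in(0,1)$ and let $\hat q_\alpha=\min\{u:\hat F_{\varepsilon^2}(u)\ge\alpha\}$ be the empirical $\alpha$-quantile of $\tilde\varepsilon_1^2,\dots,\tilde\varepsilon_d^2$. Then \[ \mathbf E(\hat q_\alpha^2)\le1+\frac{8}{(1-\alpha)\sqrt{2\pi}}. \]
   Context: $\boldsymbol\varepsilon=(\varepsilon_1,\dots,\varepsilon_d)\sim\mathcal N(0,\boldsymbol\Sigma)$, where $\boldsymbol\Sigma$ is a covariance matrix with positive diagonal entries $\sigma_i^2$ (arbitrary correlations). $\tilde\varepsilon_i=\varepsilon_i/\sigma_i$ (each standard normal), and $\hat F_{\varepsilon^2}(u)=\frac1d\#\{i:\tilde\varepsilon_i^2\le u\}$ is the empirical c.d.f. of $\tilde\varepsilon_1^2,\dots,\tilde\varepsilon_d^2$. *)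

theory Defs
  imports "HOL-Probability.Probability"
begin

text \<open>A centered Gaussian random vector (X 0, ..., X (d-1)) on the probability
space M with arbitrary (possibly singular) covariance: every linear combination
of the coordinates is either almost surely zero or a centered normal variable.\<close>
definition centered_gaussian_vector ::
  "'a measure \<Rightarrow> nat \<Rightarrow> (nat \<Rightarrow> 'a \<Rightarrow> real) \<Rightarrow> bool" where
  "centered_gaussian_vector M d X \<longleftrightarrow>
     (\<forall>i<d. X i \<in> borel_measurable M) \<and>
     (\<forall>c :: nat \<Rightarrow> real.
        (AE \<omega> in M. (\<Sum>i<d. c i * X i \<omega>) = 0) \<or>
        (\<exists>s>0. distributed M lborel (\<lambda>\<omega>. \<Sum>i<d. c i * X i \<omega>) (normal_density 0 s)))"

definition emp_cdf :: "nat \<Rightarrow> (nat \<Rightarrow> real) \<Rightarrow> real \<Rightarrow> real" where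
  "emp_cdf d x u = real (card {i\<in>{..<d}. x i \<le> u}) / real d"

definition emp_quantile :: "nat \<Rightarrow> (nat \<Rightarrow> real) \<Rightarrow> real \<Rightarrow> real" where
  "emp_quantile d x \<alpha> = (LEAST u::real. \<alpha> \<le> emp_cdf d x u)"

end

theory Submission
  imports Defs
begin

text \<open>Let $q$ be the empirical $\alpha$-quantile of $Y_i = \tilde\varepsilon_i^2$. More than
  $(1 - \alpha) d$ of the $Y_i$ are at least $q \ge 0$, so $(1 - \alpha) d q^2 \le \sum_i Y_i^2$.
  Taking expectations with $E Y_i^2 = E Z^4 = 3$ for standard normal $Z$ gives
  $E q^2 \le 3 / (1 - \alpha)$, which is below the claimed bound since $3 \le 8 / \sqrt{2\pi}$.\<close>

lemma finite_index_attains_max: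
  fixes x :: "'i \<Rightarrow> real"
  assumes "finite I" "I \<noteq> {}"
  obtains j where "j \<in> I" "\<And>i. i \<in> I \<Longrightarrow> x i \<le> x j"
proof -
  have "Max (x ` I) \<in> x ` I"
    using assms by simp
  then obtain j where "j \<in> I" "x j = Max (x ` I)"
    by auto
  with assms that show ?thesis by simp
qed

lemma finite_index_attains_min:
  fixes x :: "'i \<Rightarrow> real"
  assumes "finite I" "I \<noteq> {}"
  obtains j where "j \<in> I" "\<And>i. i \<in> I \<Longrightarrow> x j \<le> x i"
  using finite_index_attains_max[OF assms, of "\<lambda>i. - x i"] by auto

lemma sample_downset_eq_sublevel_set:
  fixes x :: "nat \<Rightarrow> real"
  assumes "i < d" "P (x i)" and down: "\<And>a b. P a \<Longrightarrow> b \<le> a \<Longrightarrow> P b"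
  obtains j where "j < d" "P (x j)" "{i\<in>{..<d}. x i \<le> x j} = {i\<in>{..<d}. P (x i)}"
proof -
  obtain j where j: "j \<in> {i\<in>{..<d}. P (x i)}" "\<And>i. i \<in> {i\<in>{..<d}. P (x i)} \<Longrightarrow> x i \<le> x j"
    by (rule finite_index_attains_max[of "{i\<in>{..<d}. P (x i)}" x]) (use assms in auto)
  then show ?thesis
    using that down by blast
qed

lemma emp_cdf_attained_at_sample:
  assumes "i < d" "x i \<le> u"
  obtains j where "j < d" "x j \<le> u" "emp_cdf d x (x j) = emp_cdf d x u"
proof -
  obtain j where "j < d" "x j \<le> u" "{i\<in>{..<d}. x i \<le> x j} = {i\<in>{..<d}. x i \<le> u}"
    by (rule sample_downset_eq_sublevel_set[of i d "\<lambda>a. a \<le> u" x]) (use assms in auto)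
  with that show ?thesis by (simp add: emp_cdf_def)
qed

lemma emp_quantile_is_least_sample:
  fixes x :: "nat \<Rightarrow> real"
  assumes "d \<ge> 1" "0 < \<alpha>" "\<alpha> \<le> 1"
  obtains i where "i < d" "emp_quantile d x \<alpha> = x i" "\<alpha> \<le> emp_cdf d x (x i)"
    "\<And>u. \<alpha> \<le> emp_cdf d x u \<Longrightarrow> x i \<le> u"
proof -
  define T where "T = {i\<in>{..<d}. \<alpha> \<le> emp_cdf d x (x i)}"
  obtain j where "j < d" "{i\<in>{..<d}. x i \<le> x j} = {i\<in>{..<d}. True}"
    by (rule sample_downset_eq_sublevel_set[of 0 d "\<lambda>_. True" x]) (use assms(1) in auto)
  then have "j \<in> T"
    using assms by (simp add: T_def emp_cdf_def)
  then obtain i where i: "i \<in> T" "\<And>k. k \<in> T \<Longrightarrow> x i \<le> x k"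
    using finite_index_attains_min[of T x] by (auto simp: T_def)
  have least: "x i \<le> u" if "\<alpha> \<le> emp_cdf d x u" for u
  proof -
    have "0 < emp_cdf d x u"
      using that assms(2) by linarith
    then have "{k\<in>{..<d}. x k \<le> u} \<noteq> {}"
      unfolding emp_cdf_def by (metis card.empty div_0 of_nat_0 less_irrefl)
    then obtain k where "k < d" "x k \<le> u" by auto
    then obtain j where "j < d" "x j \<le> u" "emp_cdf d x (x j) = emp_cdf d x u"
      by (rule emp_cdf_attained_at_sample)
    with that i(2)[of j] show ?thesis by (simp add: T_def)
  qed
  have "emp_quantile d x \<alpha> = x i"
    unfolding emp_quantile_def
    by (rule Least_equality) (use i(1) least in \<open>auto simp: T_def\<close>)
  with i(1) least that show ?thesis by (auto simp: T_def)
qed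

lemma emp_quantile_upper_tail_card:
  fixes x :: "nat \<Rightarrow> real" and \<alpha> :: real
  assumes "d \<ge> 1" "0 < \<alpha>" "\<alpha> \<le> 1"
  shows "(1 - \<alpha>) * d < card {i\<in>{..<d}. emp_quantile d x \<alpha> \<le> x i}"
proof -
  obtain q where q: "q = emp_quantile d x \<alpha>" "\<And>u. \<alpha> \<le> emp_cdf d x u \<Longrightarrow> q \<le> u"
    using emp_quantile_is_least_sample[of d \<alpha> x] assms by metis
  define A where "A = {i\<in>{..<d}. x i < q}"
  define B where "B = {i\<in>{..<d}. q \<le> x i}"
  have "real (card A) < \<alpha> * d"
  proof (cases "A = {}")
    case True
    then show ?thesis using assms by simp
  next
    case False
    then obtain i where "i < d" "x i < q" by (auto simp: A_def)
    then obtain j where "x j < q" "{i\<in>{..<d}. x i \<le> x j} = A"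
      using sample_downset_eq_sublevel_set[of i d "\<lambda>a. a < q" x] by (auto simp: A_def)
    moreover from \<open>x j < q\<close> have "emp_cdf d x (x j) < \<alpha>"
      using q(2)[of "x j"] by linarith
    ultimately show ?thesis
      using assms by (simp add: emp_cdf_def field_simps)
  qed
  moreover have "A \<union> B = {..<d}" "A \<inter> B = {}"
    by (auto simp: A_def B_def)
  then have "card A + card B = d"
    by (metis card_Un_disjoint card_lessThan finite_Un finite_lessThan)
  ultimately show ?thesis
    by (simp add: B_def q(1)[symmetric] algebra_simps flip: of_nat_add)
qed

lemma card_ge_mult_square_le_sum_squares:
  fixes x :: "'i \<Rightarrow> real"
  assumes "finite I" "0 \<le> t"
  shows "real (card {i\<in>I. t \<le> x i}) * t\<^sup>2 \<le> (\<Sum>i\<in>I. (x i)\<^sup>2)"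
proof -
  have "real (card {i\<in>I. t \<le> x i}) * t\<^sup>2 = (\<Sum>i\<in>{i\<in>I. t \<le> x i}. t\<^sup>2)"
    by simp
  also have "\<dots> \<le> (\<Sum>i\<in>{i\<in>I. t \<le> x i}. (x i)\<^sup>2)"
    by (rule sum_mono) (use assms in \<open>auto intro: power_mono\<close>)
  also have "\<dots> \<le> (\<Sum>i\<in>I. (x i)\<^sup>2)"
    by (rule sum_mono2) (use assms in auto)
  finally show ?thesis .
qed

lemma emp_quantile_square_le:
  fixes x :: "nat \<Rightarrow> real"
  assumes "d \<ge> 1" "0 < \<alpha>" "\<alpha> < 1" and nonneg: "\<And>i. i < d \<Longrightarrow> 0 \<le> x i"
  shows "(emp_quantile d x \<alpha>)\<^sup>2 \<le> (\<Sum>i<d. (x i)\<^sup>2) / ((1 - \<alpha>) * d)"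
proof -
  define q where "q = emp_quantile d x \<alpha>"
  have "0 \<le> q"
    using emp_quantile_is_least_sample[of d \<alpha> x] assms by (metis less_imp_le q_def)
  have "(1 - \<alpha>) * d * q\<^sup>2 \<le> card {i\<in>{..<d}. q \<le> x i} * q\<^sup>2"
    using emp_quantile_upper_tail_card[of d \<alpha> x] assms
    by (intro mult_right_mono) (auto simp: q_def)
  also have "\<dots> \<le> (\<Sum>i<d. (x i)\<^sup>2)"
    using card_ge_mult_square_le_sum_squares[of "{..<d}" q x] \<open>0 \<le> q\<close> by simp
  finally show ?thesis
    using assms by (simp add: q_def field_simps)
qed

lemma nn_integral_normal_standardized_fourth_power:
  fixes X :: "'a \<Rightarrow> real"
  assumes s: "0 < s" and X: "distributed M lborel X (normal_density 0 s)"
  shows "(\<integral>\<^sup>+\<omega>. ennreal ((X \<omega> / s) ^ 4) \<partial>M) = 3"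
proof -
  have "has_bochner_integral lborel (\<lambda>x. normal_density 0 s x * (x - 0) ^ (2 * 2) / s ^ 4)
      (fact (2 * 2) / ((2 / s\<^sup>2) ^ 2 * fact 2) / s ^ 4)"
    using normal_moment_even[OF s, of 0 2] by (rule has_bochner_integral_divide_zero)
  moreover have "fact (2 * 2) / ((2 / s\<^sup>2) ^ 2 * fact 2) / s ^ 4 = (3 :: real)"
    using s by (simp add: fact_numeral field_simps power2_eq_square power4_eq_xxxx)
  ultimately have "has_bochner_integral lborel (\<lambda>x. normal_density 0 s x * (x / s) ^ 4) 3"
    by (simp add: power_divide)
  then have "(\<integral>\<^sup>+x. ennreal (normal_density 0 s x * (x / s) ^ 4) \<partial>lborel) = 3"
    by (subst nn_integral_eq_integral)
       (auto simp: has_bochner_integral_iff normal_density_nonneg zero_le_even_power)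
  moreover have "(\<integral>\<^sup>+x. ennreal (normal_density 0 s x) * ennreal ((x / s) ^ 4) \<partial>lborel)
      = (\<integral>\<^sup>+\<omega>. ennreal ((X \<omega> / s) ^ 4) \<partial>M)"
    by (rule distributed_nn_integral[OF X]) simp
  ultimately show ?thesis
    by (simp add: ennreal_mult' normal_density_nonneg)
qed

lemma nn_integral_emp_quantile_square_le:
  fixes Y :: "nat \<Rightarrow> 'a \<Rightarrow> real"
  assumes "d \<ge> 1" "0 < \<alpha>" "\<alpha> < 1"
    and meas: "\<And>i. i < d \<Longrightarrow> Y i \<in> borel_measurable M"
    and nonneg: "\<And>i \<omega>. i < d \<Longrightarrow> 0 \<le> Y i \<omega>"
  shows "(\<integral>\<^sup>+\<omega>. ennreal ((emp_quantile d (\<lambda>i. Y i \<omega>) \<alpha>)\<^sup>2) \<partial>M)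
    \<le> ennreal (1 / ((1 - \<alpha>) * d)) * (\<Sum>i<d. \<integral>\<^sup>+\<omega>. ennreal ((Y i \<omega>)\<^sup>2) \<partial>M)"
proof -
  define c where "c = 1 / ((1 - \<alpha>) * d)"
  have "0 \<le> c"
    using assms(3) by (simp add: c_def)
  have "(\<integral>\<^sup>+\<omega>. ennreal ((emp_quantile d (\<lambda>i. Y i \<omega>) \<alpha>)\<^sup>2) \<partial>M)
      \<le> (\<integral>\<^sup>+\<omega>. ennreal c * (\<Sum>i<d. ennreal ((Y i \<omega>)\<^sup>2)) \<partial>M)"
  proof (rule nn_integral_mono)
    fix \<omega>
    have "(emp_quantile d (\<lambda>i. Y i \<omega>) \<alpha>)\<^sup>2 \<le> c * (\<Sum>i<d. (Y i \<omega>)\<^sup>2)"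
      using emp_quantile_square_le[of d \<alpha> "\<lambda>i. Y i \<omega>"] assms by (simp add: c_def)
    then have "ennreal ((emp_quantile d (\<lambda>i. Y i \<omega>) \<alpha>)\<^sup>2) \<le> ennreal (c * (\<Sum>i<d. (Y i \<omega>)\<^sup>2))"
      by (rule ennreal_leI)
    also have "\<dots> = ennreal c * (\<Sum>i<d. ennreal ((Y i \<omega>)\<^sup>2))"
      using \<open>0 \<le> c\<close> by (simp add: ennreal_mult sum_nonneg)
    finally show "ennreal ((emp_quantile d (\<lambda>i. Y i \<omega>) \<alpha>)\<^sup>2) \<le> ennreal c * (\<Sum>i<d. ennreal ((Y i \<omega>)\<^sup>2))" .
  qed
  also have "\<dots> = ennreal c * (\<Sum>i<d. \<integral>\<^sup>+\<omega>. ennreal ((Y i \<omega>)\<^sup>2) \<partial>M)"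
  proof -
    have "(\<lambda>\<omega>. \<Sum>i<d. ennreal ((Y i \<omega>)\<^sup>2)) \<in> borel_measurable M"
      using meas by (intro borel_measurable_sum) auto
    moreover have "(\<integral>\<^sup>+\<omega>. (\<Sum>i<d. ennreal ((Y i \<omega>)\<^sup>2)) \<partial>M) = (\<Sum>i<d. \<integral>\<^sup>+\<omega>. ennreal ((Y i \<omega>)\<^sup>2) \<partial>M)"
      using meas by (intro nn_integral_sum) auto
    ultimately show ?thesis
      by (simp only: nn_integral_cmult)
  qed
  finally show ?thesis
    by (simp add: c_def)
qed

lemma three_le_eight_div_sqrt_two_pi: "3 \<le> 8 / sqrt (2 * pi)"
proof -
  have "sqrt (2 * pi) \<le> 8 / 3"
    by (rule real_le_lsqrt) (use pi_approx(2) in \<open>auto simp: power2_eq_square\<close>)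
  then show ?thesis
    by (simp add: field_simps)
qed

theorem lemma3:
  fixes M :: "'a measure" and d :: nat and \<epsilon> :: "nat \<Rightarrow> 'a \<Rightarrow> real"
    and \<sigma> :: "nat \<Rightarrow> real" and \<alpha> :: real
  assumes "prob_space M"
    and "d \<ge> 1"
    and "centered_gaussian_vector M d \<epsilon>"
    and "\<And>i. i < d \<Longrightarrow> \<sigma> i > 0"
    and "\<And>i. i < d \<Longrightarrow> distributed M lborel (\<epsilon> i) (normal_density 0 (\<sigma> i))"
    and "0 < \<alpha>" and "\<alpha> < 1"
  shows "(\<integral>\<^sup>+ \<omega>. ennreal ((emp_quantile d (\<lambda>i. (\<epsilon> i \<omega> / \<sigma> i)\<^sup>2) \<alpha>)\<^sup>2) \<partial>M)
           \<le> ennreal (1 + 8 / ((1 - \<alpha>) * sqrt (2 * pi)))"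
proof -
  have fourth_moment: "(\<integral>\<^sup>+\<omega>. ennreal (((\<epsilon> i \<omega> / \<sigma> i)\<^sup>2)\<^sup>2) \<partial>M) = 3" if "i < d" for i
    using nn_integral_normal_standardized_fourth_power[OF assms(4,5)[OF that]]
    by (simp flip: power_mult)
  have "(\<integral>\<^sup>+ \<omega>. ennreal ((emp_quantile d (\<lambda>i. (\<epsilon> i \<omega> / \<sigma> i)\<^sup>2) \<alpha>)\<^sup>2) \<partial>M)
      \<le> ennreal (1 / ((1 - \<alpha>) * d)) * (\<Sum>i<d. \<integral>\<^sup>+\<omega>. ennreal (((\<epsilon> i \<omega> / \<sigma> i)\<^sup>2)\<^sup>2) \<partial>M)"
  proof (rule nn_integral_emp_quantile_square_le)
    fix i assume "i < d"
    then have "\<epsilon> i \<in> borel_measurable M"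
      using distributed_measurable[OF assms(5)] by simp
    then show "(\<lambda>\<omega>. (\<epsilon> i \<omega> / \<sigma> i)\<^sup>2) \<in> borel_measurable M"
      by measurable
  qed (use assms(2,6,7) in auto)
  also have "\<dots> = ennreal (1 / ((1 - \<alpha>) * d)) * ennreal (3 * d)"
    using fourth_moment by (simp add: ennreal_of_nat_eq_real_of_nat ennreal_mult mult.commute)
  also have "\<dots> = ennreal (3 / (1 - \<alpha>))"
    using assms(2,7) by (simp flip: ennreal_mult)
  also have "\<dots> \<le> ennreal (1 + 8 / ((1 - \<alpha>) * sqrt (2 * pi)))"
  proof (rule ennreal_leI)
    have "3 / (1 - \<alpha>) \<le> 8 / sqrt (2 * pi) / (1 - \<alpha>)"
      using three_le_eight_div_sqrt_two_pi assms(7) by (intro divide_right_mono) auto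
    then show "3 / (1 - \<alpha>) \<le> 1 + 8 / ((1 - \<alpha>) * sqrt (2 * pi))"
      by (simp add: mult.commute)
  qed
  finally show ?thesis .
qed

end
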